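(* Let $(\Omega,\mathcal F,Q)$ be a probability space and $\pi>0$. Let $c:\mathbb R\to\mathbb R$ be non-decreasing and continuous, and let $\alpha_1:\mathbb R\times\Omega\to[0,\pi]$ be $\mathcal B(\mathbb R)\otimes\mathcal F$-measurable such that $g\mapsto\alpha_1(g)(\omega)$ is non-decreasing for almost all $\omega\in\Omega$. Let $\varepsilon$ be a random variable such that the map $\mathbb R\to[0,\pi]$, $x\mapsto \mathbb E^Q(\alpha_1(x+\varepsilon))=\int_\Omega\alpha_1(x+\varepsilon(\omega'))(\omega')\,Q(d\omega')$ is continuous. For each $g\in\mathbb R$ define $f^g:[0,\pi]\to\mathbb R$ by $$f^g(a)=a-\int_\Omega\alpha_1\big(g-c(a)+\varepsilon(\omega')\big)(\omega')\,Q(d\omega').$$ Then: (i) for each $g\in\mathbb R$ there exists a unique $\alpha_0(g)\in[0,\pi]$ with $f^g(\alpha_0(g))=0$; (ii) $\alpha_0(g)=\lim_{n\to\infty}a^g_n$, where $a^g_n=\tfrac12(\overline a^g_n+\underline a^g_n)$ with $\underline a^g_0=0$, $\overline a^g_0=\pi$, and $(\overline a^g_{n+1},\underline a^g_{n+1})=(a^g_n,\underline a^g_n)$ if $f^g(a^g_n)\ge 0$, $(\overline a^g_{n+1},\underline a^g_{n+1})=(\overline a^g_n,a^g_n)$ if $f^g(a^g_n)<0$; (iii) the map $\mathbb R\to[0,\pi]$, $g\mapsto\alpha_0(g)$, is non-decreasing and continuous. *)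

theory Defs
  imports "HOL-Probability.Probability"
begin

definition fg :: "'w measure \<Rightarrow> (real \<Rightarrow> real) \<Rightarrow> (real \<Rightarrow> 'w \<Rightarrow> real) \<Rightarrow> ('w \<Rightarrow> real)
                   \<Rightarrow> real \<Rightarrow> real \<Rightarrow> real" where
  "fg Q c \<alpha>1 \<epsilon> g a = a - (\<integral>\<omega>. \<alpha>1 (g - c a + \<epsilon> \<omega>) \<omega> \<partial>Q)"

fun bisect :: "(real \<Rightarrow> real) \<Rightarrow> real \<Rightarrow> nat \<Rightarrow> real \<times> real" where
  "bisect f p 0 = (p, 0)"
| "bisect f p (Suc n) =
     (let (u, l) = bisect f p n; m = (u + l) / 2
      in if f m \<ge> 0 then (m, l) else (u, m))"

definition bisect_mid :: "(real \<Rightarrow> real) \<Rightarrow> real \<Rightarrow> nat \<Rightarrow> real" where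
  "bisect_mid f p n = (fst (bisect f p n) + snd (bisect f p n)) / 2"

end

theory Submission
  imports Defs
begin

text \<open>Write \<open>H x = E\<^sup>Q(\<alpha>\<^sub>1(x + \<epsilon>))\<close>, so that \<open>f\<^sup>g(a) = a - H(g - c(a))\<close>. Since \<open>H\<close> is
  non-decreasing with values in \<open>[0,\<pi>]\<close> and \<open>c\<close> is non-decreasing, \<open>f\<^sup>g\<close> is strictly increasing,
  continuous, non-positive at \<open>0\<close> and non-negative at \<open>\<pi>\<close>: the intermediate value theorem gives
  a unique zero \<open>\<alpha>\<^sub>0(g)\<close>, which bisection brackets with error \<open>\<pi>/2\<^sup>n\<close>. Moreover \<open>f\<^sup>g(a)\<close> is
  non-increasing and continuous in \<open>g\<close>, and for any family strictly increasing in \<open>a\<close> the zero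
  then depends monotonically and continuously on the parameter.\<close>

lemma bisect_brackets:
  fixes f :: "real \<Rightarrow> real"
  assumes up: "\<And>x. f x \<ge> 0 \<Longrightarrow> r \<le> x" and lo: "\<And>x. f x < 0 \<Longrightarrow> x \<le> r"
    and r: "0 \<le> r" "r \<le> p"
  shows "snd (bisect f p n) \<le> r \<and> r \<le> fst (bisect f p n)
         \<and> fst (bisect f p n) - snd (bisect f p n) = p / 2 ^ n"
proof (induction n)
  case 0
  then show ?case using r by simp
next
  case (Suc n)
  obtain u l where ul: "bisect f p n = (u, l)" by (cases "bisect f p n")
  show ?case
  proof (cases "f ((u + l) / 2) \<ge> 0")
    case True
    then show ?thesis using Suc ul up[OF True] by (simp add: Let_def field_simps)
  next
    case False
    then show ?thesis using Suc ul lo[of "(u + l) / 2"] by (simp add: Let_def field_simps)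
  qed
qed

lemma LIMSEQ_bisect_mid:
  fixes f :: "real \<Rightarrow> real"
  assumes up: "\<And>x. f x \<ge> 0 \<Longrightarrow> r \<le> x" and lo: "\<And>x. f x < 0 \<Longrightarrow> x \<le> r"
    and r: "0 \<le> r" "r \<le> p"
  shows "(\<lambda>n. bisect_mid f p n) \<longlonglongrightarrow> r"
proof (rule tendsto_sandwich[where f="\<lambda>n. r - p / 2 ^ n" and h="\<lambda>n. r + p / 2 ^ n"])
  have brackets: "snd (bisect f p n) \<le> r \<and> r \<le> fst (bisect f p n)
      \<and> fst (bisect f p n) - snd (bisect f p n) = p / 2 ^ n" for n
    by (rule bisect_brackets[OF up lo r])
  have midpoint: "r - d \<le> (u + l) / 2 \<and> (u + l) / 2 \<le> r + d"
    if "l \<le> r" "r \<le> u" "u - l = d" for u l d :: real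
    using that by auto
  have "r - p / 2 ^ n \<le> bisect_mid f p n \<and> bisect_mid f p n \<le> r + p / 2 ^ n" for n
    using brackets[of n] midpoint unfolding bisect_mid_def by blast
  then show "\<forall>\<^sub>F n in sequentially. r - p / 2 ^ n \<le> bisect_mid f p n"
    "\<forall>\<^sub>F n in sequentially. bisect_mid f p n \<le> r + p / 2 ^ n"
    by (auto intro: always_eventually)
  have "(\<lambda>n. p / 2 ^ n :: real) \<longlonglongrightarrow> 0" by (rule LIMSEQ_divide_realpow_zero) simp
  then show "(\<lambda>n. r - p / 2 ^ n) \<longlonglongrightarrow> r" "(\<lambda>n. r + p / 2 ^ n) \<longlonglongrightarrow> r"
    using tendsto_diff[OF tendsto_const, of _ 0 sequentially r]
      tendsto_add[OF tendsto_const, of _ 0 sequentially r] by auto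
qed

lemma ex_root_function:
  fixes F :: "'a \<Rightarrow> real \<Rightarrow> real"
  assumes "0 \<le> p" and "\<And>g. continuous_on {0..p} (F g)"
    and "\<And>g. F g 0 \<le> 0" and "\<And>g. 0 \<le> F g p"
  shows "\<exists>A. \<forall>g. A g \<in> {0..p} \<and> F g (A g) = 0"
proof -
  have "\<exists>a. 0 \<le> a \<and> a \<le> p \<and> F g a = 0" for g
    by (rule IVT') (use assms in auto)
  then have "\<forall>g. \<exists>a. a \<in> {0..p} \<and> F g a = 0" by simp
  then show ?thesis by (rule choice)
qed

lemma mono_root_function:
  fixes F :: "'a::order \<Rightarrow> real \<Rightarrow> real"
  assumes "\<And>g. strict_mono (F g)" and "\<And>g g' a. g \<le> g' \<Longrightarrow> F g' a \<le> F g a"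
    and "\<And>g. F g (A g) = 0"
  shows "mono A"
proof (rule monoI)
  fix g g' :: 'a assume "g \<le> g'"
  then have "F g' (A g) \<le> F g' (A g')" using assms(2,3) by metis
  then show "A g \<le> A g'" using assms(1) by (simp add: strict_mono_less_eq)
qed

lemma isCont_root_function:
  fixes F :: "'a::t2_space \<Rightarrow> real \<Rightarrow> real"
  assumes "\<And>g. strict_mono (F g)" and "\<And>a. isCont (\<lambda>g. F g a) g0"
    and "\<And>g. F g (A g) = 0"
  shows "isCont A g0"
  unfolding isCont_def
proof (rule tendstoI)
  fix e :: real assume "e > 0"
  then have "F g0 (A g0 - e) < F g0 (A g0)" "F g0 (A g0) < F g0 (A g0 + e)"
    using assms(1)[of g0] by (simp_all add: strict_mono_less)
  then have "F g0 (A g0 - e) < 0" "0 < F g0 (A g0 + e)"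
    using assms(3)[of g0] by simp_all
  moreover have "(\<lambda>g. F g a) \<midarrow>g0\<rightarrow> F g0 a" for a
    using assms(2) by (simp add: isCont_def)
  ultimately have "\<forall>\<^sub>F g in at g0. F g (A g0 - e) < 0 \<and> 0 < F g (A g0 + e)"
    by (intro eventually_conj order_tendstoD)
  then show "\<forall>\<^sub>F g in at g0. dist (A g) (A g0) < e"
  proof (rule eventually_mono)
    fix g assume "F g (A g0 - e) < 0 \<and> 0 < F g (A g0 + e)"
    then have "F g (A g0 - e) < F g (A g) \<and> F g (A g) < F g (A g0 + e)"
      using assms(3) by simp
    then show "dist (A g) (A g0) < e"
      using assms(1)[of g] by (auto simp: strict_mono_less dist_real_def abs_less_iff)
  qed
qed

lemma strict_mono_minus_mono_comp:
  fixes H c :: "real \<Rightarrow> real"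
  assumes "mono H" and "mono c"
  shows "strict_mono (\<lambda>a. a - H (g - c a))"
proof (rule strict_monoI)
  fix a b :: real assume "a < b"
  then have "H (g - c b) \<le> H (g - c a)"
    using assms by (simp add: mono_def)
  then show "a - H (g - c a) < b - H (g - c b)" using \<open>a < b\<close> by simp
qed

context prob_space
begin

lemma integrable_shifted_section:
  fixes \<alpha>1 :: "real \<Rightarrow> 'a \<Rightarrow> real" and \<epsilon> :: "'a \<Rightarrow> real" and p x :: real
  assumes "(\<lambda>(g, \<omega>). \<alpha>1 g \<omega>) \<in> borel_measurable (borel \<Otimes>\<^sub>M M)"
    and "\<epsilon> \<in> borel_measurable M" and "\<And>g \<omega>. \<omega> \<in> space M \<Longrightarrow> \<alpha>1 g \<omega> \<in> {0..p}"
  shows "integrable M (\<lambda>\<omega>. \<alpha>1 (x + \<epsilon> \<omega>) \<omega>)"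
proof (rule integrable_const_bound[where B=p])
  have "(\<lambda>\<omega>. (x + \<epsilon> \<omega>, \<omega>)) \<in> measurable M (borel \<Otimes>\<^sub>M M)"
    using assms(2) by measurable
  from measurable_comp[OF this assms(1)]
  show "(\<lambda>\<omega>. \<alpha>1 (x + \<epsilon> \<omega>) \<omega>) \<in> borel_measurable M" by (simp add: o_def)
qed (use assms(3) in auto)

lemma integral_shifted_section_bounds:
  fixes \<alpha>1 :: "real \<Rightarrow> 'a \<Rightarrow> real" and \<epsilon> :: "'a \<Rightarrow> real" and p x :: real
  assumes "(\<lambda>(g, \<omega>). \<alpha>1 g \<omega>) \<in> borel_measurable (borel \<Otimes>\<^sub>M M)"
    and "\<epsilon> \<in> borel_measurable M" and "\<And>g \<omega>. \<omega> \<in> space M \<Longrightarrow> \<alpha>1 g \<omega> \<in> {0..p}"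
  shows "(\<integral>\<omega>. \<alpha>1 (x + \<epsilon> \<omega>) \<omega> \<partial>M) \<in> {0..p}"
proof -
  have "0 \<le> (\<integral>\<omega>. \<alpha>1 (x + \<epsilon> \<omega>) \<omega> \<partial>M)"
    by (rule integral_nonneg_AE) (use assms(3) in auto)
  moreover have "(\<integral>\<omega>. \<alpha>1 (x + \<epsilon> \<omega>) \<omega> \<partial>M) \<le> (\<integral>\<omega>. p \<partial>M)"
    by (rule integral_mono_AE) (use integrable_shifted_section[OF assms] assms(3) in auto)
  ultimately show ?thesis by (simp add: prob_space)
qed

lemma integral_shifted_section_mono:
  fixes \<alpha>1 :: "real \<Rightarrow> 'a \<Rightarrow> real" and \<epsilon> :: "'a \<Rightarrow> real" and p :: real
  assumes "(\<lambda>(g, \<omega>). \<alpha>1 g \<omega>) \<in> borel_measurable (borel \<Otimes>\<^sub>M M)"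
    and "\<epsilon> \<in> borel_measurable M" and "\<And>g \<omega>. \<omega> \<in> space M \<Longrightarrow> \<alpha>1 g \<omega> \<in> {0..p}"
    and "AE \<omega> in M. mono (\<lambda>g. \<alpha>1 g \<omega>)"
  shows "mono (\<lambda>x. \<integral>\<omega>. \<alpha>1 (x + \<epsilon> \<omega>) \<omega> \<partial>M)"
proof (rule monoI)
  fix x y :: real assume "x \<le> y"
  show "(\<integral>\<omega>. \<alpha>1 (x + \<epsilon> \<omega>) \<omega> \<partial>M) \<le> (\<integral>\<omega>. \<alpha>1 (y + \<epsilon> \<omega>) \<omega> \<partial>M)"
    by (rule integral_mono_AE[OF integrable_shifted_section[OF assms(1-3)]
          integrable_shifted_section[OF assms(1-3)]])
      (use assms(4) \<open>x \<le> y\<close> in \<open>auto simp: mono_def\<close>)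
qed

end

theorem lemma1:
  fixes Q :: "'w measure" and p :: real and c :: "real \<Rightarrow> real"
    and \<alpha>1 :: "real \<Rightarrow> 'w \<Rightarrow> real" and \<epsilon> :: "'w \<Rightarrow> real"
  assumes "prob_space Q"
    and "p > 0"
    and "mono c" and "continuous_on UNIV c"
    and "(\<lambda>(g, \<omega>). \<alpha>1 g \<omega>) \<in> borel_measurable (borel \<Otimes>\<^sub>M Q)"
    and "\<And>g \<omega>. \<omega> \<in> space Q \<Longrightarrow> \<alpha>1 g \<omega> \<in> {0..p}"
    and "AE \<omega> in Q. mono (\<lambda>g. \<alpha>1 g \<omega>)"
    and "\<epsilon> \<in> borel_measurable Q"
    and "continuous_on UNIV (\<lambda>x. \<integral>\<omega>. \<alpha>1 (x + \<epsilon> \<omega>) \<omega> \<partial>Q)"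
  shows "\<exists>\<alpha>0 :: real \<Rightarrow> real.
           (\<forall>g. \<alpha>0 g \<in> {0..p} \<and> fg Q c \<alpha>1 \<epsilon> g (\<alpha>0 g) = 0
                \<and> (\<forall>a\<in>{0..p}. fg Q c \<alpha>1 \<epsilon> g a = 0 \<longrightarrow> a = \<alpha>0 g))
         \<and> (\<forall>g. (\<lambda>n. bisect_mid (fg Q c \<alpha>1 \<epsilon> g) p n) \<longlonglongrightarrow> \<alpha>0 g)
         \<and> mono \<alpha>0 \<and> continuous_on UNIV \<alpha>0"
proof -
  define H where "H x = (\<integral>\<omega>. \<alpha>1 (x + \<epsilon> \<omega>) \<omega> \<partial>Q)" for x
  define F where "F = fg Q c \<alpha>1 \<epsilon>"
  have F: "F g a = a - H (g - c a)" for g a by (simp add: F_def fg_def H_def)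
  have H_bounds: "H x \<in> {0..p}" for x
    unfolding H_def by (rule prob_space.integral_shifted_section_bounds) (use assms in auto)
  have "mono H"
    unfolding H_def[abs_def] by (rule prob_space.integral_shifted_section_mono) (use assms in auto)
  then have F_strict: "strict_mono (F g)" for g
    unfolding F[abs_def] using strict_mono_minus_mono_comp assms(3) by blast
  have H_cont: "isCont H x" and c_cont: "isCont c x" for x
    using assms(4,9) unfolding H_def[abs_def] by (simp_all add: continuous_on_eq_continuous_at)
  have F_cont: "continuous_on {0..p} (F g)" and F_cont_param: "isCont (\<lambda>g. F g a) g" for g a
    unfolding F by (auto intro!: continuous_at_imp_continuous_on continuous_intros c_cont
        continuous_at_compose[OF _ H_cont, unfolded o_def])
  have F_antitone: "F g' a \<le> F g a" if "g \<le> g'" for g g' a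
    unfolding F using \<open>mono H\<close> that by (simp add: mono_def)
  have F_ends: "F g 0 \<le> 0" "0 \<le> F g p" for g
    using H_bounds[of "g - c 0"] H_bounds[of "g - c p"] by (simp_all add: F)
  have "\<exists>A. \<forall>g. A g \<in> {0..p} \<and> F g (A g) = 0"
    using assms(2) by (intro ex_root_function F_cont F_ends) simp
  then obtain A where A: "A g \<in> {0..p}" "F g (A g) = 0" for g by blast
  have A_sign: "0 \<le> F g x \<longleftrightarrow> A g \<le> x" "F g x < 0 \<longleftrightarrow> x < A g" for g x
    using strict_mono_less_eq[OF F_strict[of g], of "A g" x]
      strict_mono_less[OF F_strict[of g], of x "A g"] A(2)
    by simp_all
  have "(\<lambda>n. bisect_mid (F g) p n) \<longlonglongrightarrow> A g" for g
    by (rule LIMSEQ_bisect_mid) (use A[of g] A_sign in auto)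
  moreover have "mono A" by (rule mono_root_function[OF F_strict F_antitone A(2)])
  moreover have "isCont A g" for g by (rule isCont_root_function[OF F_strict F_cont_param A(2)])
  moreover have "a = A g" if "F g a = 0" for g a
    using A(2)[of g] that strict_mono_eq[OF F_strict] by metis
  ultimately show ?thesis
    using A unfolding F_def[symmetric]
    by (intro exI[of _ A]) (auto intro: continuous_at_imp_continuous_on)
qed

end
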